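(* For each $i\in\{1,\dots,n\}$, $$\sum_{\mu\in P_i}\mu=\frac{m_i\,|P_i|}{(\tilde\omega_i,\tilde\omega_i)}\,\tilde\omega_i;$$ in particular the barycenter of the weights in the $i$th coordinate face $F_i$ is parallel to $\tilde\omega_i$ (a multiple of the $i$th fundamental weight).
   Context: Let $\mathfrak g$ be a finite-dimensional complex simple Lie algebra with root system $\Phi$, base $\Pi=\{\alpha_1,\dots,\alpha_n\}$, Weyl group $W$; $E$ is the real span of $\Pi$ with $W$-invariant inner product $(\cdot,\cdot)$. Let $\omega_i$ be the fundamental weights and $\tilde\omega_i=2\omega_i/(\alpha_i,\alpha_i)$, so $(\tilde\omega_i,\alpha_j)=\delta_{ij}$. Fix a dominant integral weight $\lambda=\sum_i m_i\alpha_i$ and let $P(\lambda)$ be the set of weights of the irreducible module of highest weight $\lambda$. $P_i=\{\mu\in P(\lambda)\mid(\mu,\tilde\omega_i)=m_i\}$ and $F_i=\mathrm{conv}(P_i)$ is the $i$th coordinate face of $\mathbf P=\mathrm{conv}(W\lambda)$. *)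

theory Defs
  imports "HOL-Analysis.Analysis"
begin

text \<open>Root-system level rendering. Vectors live in a Euclidean space 'a; the base
\<Pi> = {\<alpha>_i} is indexed by a finite type 'i; E = span of the base.\<close>

definition cpair :: "'a::euclidean_space \<Rightarrow> 'a \<Rightarrow> real" where
  "cpair v a = 2 * (v \<bullet> a) / (a \<bullet> a)"

definition reflection :: "'a::euclidean_space \<Rightarrow> 'a \<Rightarrow> 'a" where
  "reflection a v = v - cpair v a *\<^sub>R a"

definition root_system :: "'a::euclidean_space set \<Rightarrow> bool" where
  "root_system \<Phi> \<longleftrightarrow> finite \<Phi> \<and> \<Phi> \<noteq> {} \<and> 0 \<notin> \<Phi> \<and>
     (\<forall>a\<in>\<Phi>. reflection a ` \<Phi> = \<Phi>) \<and>
     (\<forall>a\<in>\<Phi>. \<forall>b\<in>\<Phi>. cpair b a \<in> \<int>) \<and>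
     (\<forall>a\<in>\<Phi>. \<forall>c::real. c *\<^sub>R a \<in> \<Phi> \<longrightarrow> c = 1 \<or> c = -1)"

definition irreducible_rs :: "'a::euclidean_space set \<Rightarrow> bool" where
  "irreducible_rs \<Phi> \<longleftrightarrow> \<not> (\<exists>A B. A \<union> B = \<Phi> \<and> A \<noteq> {} \<and> B \<noteq> {} \<and>
       (\<forall>a\<in>A. \<forall>b\<in>B. a \<bullet> b = 0))"

definition is_base :: "'a::euclidean_space set \<Rightarrow> ('i::finite \<Rightarrow> 'a) \<Rightarrow> bool" where
  "is_base \<Phi> \<alpha> \<longleftrightarrow> inj \<alpha> \<and> independent (range \<alpha>) \<and> range \<alpha> \<subseteq> \<Phi> \<and>
     (\<forall>b\<in>\<Phi>. \<exists>c::'i \<Rightarrow> int. b = (\<Sum>j\<in>UNIV. of_int (c j) *\<^sub>R \<alpha> j) \<and>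
                ((\<forall>j. c j \<ge> 0) \<or> (\<forall>j. c j \<le> 0)))"

definition fund_weight :: "('i::finite \<Rightarrow> 'a::euclidean_space) \<Rightarrow> 'i \<Rightarrow> 'a" where
  "fund_weight \<alpha> i = (THE v. v \<in> span (range \<alpha>) \<and>
       (\<forall>j. cpair v (\<alpha> j) = (if j = i then 1 else 0)))"

definition fund_weight_tilde :: "('i::finite \<Rightarrow> 'a::euclidean_space) \<Rightarrow> 'i \<Rightarrow> 'a" where
  "fund_weight_tilde \<alpha> i = (2 / (\<alpha> i \<bullet> \<alpha> i)) *\<^sub>R fund_weight \<alpha> i"

definition dominant_integral :: "('i::finite \<Rightarrow> 'a::euclidean_space) \<Rightarrow> 'a \<Rightarrow> bool" where
  "dominant_integral \<alpha> lam \<longleftrightarrow> lam \<in> span (range \<alpha>) \<and>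
     (\<forall>i. \<exists>k::nat. cpair lam (\<alpha> i) = of_nat k)"

text \<open>P(lam): the weights of the irreducible module of highest weight lam, i.e. the
smallest saturated set of weights containing lam (closed under alpha-strings):
if mu is a weight, a a root and 0 \<le> k \<le> <mu, a^vee>, then mu - k a is a weight.\<close>
inductive_set weights_of :: "'a::euclidean_space set \<Rightarrow> 'a \<Rightarrow> 'a set"
  for \<Phi> :: "'a set" and lam :: 'a where
  hw: "lam \<in> weights_of \<Phi> lam"
| string: "\<lbrakk>mu \<in> weights_of \<Phi> lam; a \<in> \<Phi>; 0 \<le> k; of_int k \<le> cpair mu a\<rbrakk>
            \<Longrightarrow> mu - of_int k *\<^sub>R a \<in> weights_of \<Phi> lam"

definition face_weights ::
  "'a::euclidean_space set \<Rightarrow> ('i::finite \<Rightarrow> 'a) \<Rightarrow> 'a \<Rightarrow> ('i \<Rightarrow> real) \<Rightarrow> 'i \<Rightarrow> 'a set" where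
  "face_weights \<Phi> \<alpha> lam m i = {mu \<in> weights_of \<Phi> lam. mu \<bullet> fund_weight_tilde \<alpha> i = m i}"

end

theory Submission
  imports Defs
begin

text \<open>For j \<noteq> i the simple reflection s_j fixes \<omega>~_i, so it permutes P_i while negating
\<alpha>_j; hence the sum of P_i is orthogonal to every \<alpha>_j with j \<noteq> i. Inside E these
orthogonality conditions cut out the line through \<omega>~_i, and the scalar is read off from
(\<mu>, \<omega>~_i) = m_i for every \<mu> in P_i.\<close>

lemma cpair_diff: "cpair (x - y) a = cpair x a - cpair y a"
  unfolding cpair_def by (simp add: inner_diff_left diff_divide_distrib)

lemma cpair_scaleR: "cpair (c *\<^sub>R x) a = c * cpair x a"
  unfolding cpair_def by simp

lemma cpair_self: "a \<noteq> 0 \<Longrightarrow> cpair a a = 2"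
  unfolding cpair_def by simp

lemma reflection_self: "a \<noteq> 0 \<Longrightarrow> reflection a a = - a"
  unfolding reflection_def by (simp add: cpair_self scaleR_2)

lemma cpair_reflection_self: "a \<noteq> 0 \<Longrightarrow> cpair (reflection a v) a = - cpair v a"
  unfolding reflection_def by (simp add: cpair_diff cpair_scaleR cpair_self)

lemma reflection_reflection: "a \<noteq> 0 \<Longrightarrow> reflection a (reflection a v) = v"
  using cpair_reflection_self[of a v] unfolding reflection_def[of a "reflection a v"]
  by (simp add: reflection_def)

lemma inner_reflection_self: "a \<noteq> 0 \<Longrightarrow> reflection a v \<bullet> a = - (v \<bullet> a)"
  by (simp add: reflection_def cpair_def inner_diff_left)

lemma inner_sum_eq_0_if_reflection_invariant:
  assumes "a \<noteq> 0" and "reflection a ` S \<subseteq> S"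
  shows "(\<Sum>S) \<bullet> a = 0"
proof -
  have "bij_betw (reflection a) S S"
    by (rule bij_betwI[where g = "reflection a"])
       (use assms in \<open>auto simp: reflection_reflection\<close>)
  then have "(\<Sum>v\<in>S. v \<bullet> a) = (\<Sum>v\<in>S. reflection a v \<bullet> a)"
    using sum.reindex_bij_betw[of "reflection a" S S "\<lambda>v. v \<bullet> a"] by simp
  also have "\<dots> = - (\<Sum>v\<in>S. v \<bullet> a)"
    by (simp add: inner_reflection_self[OF assms(1)] sum_negf)
  finally show ?thesis by (simp add: inner_sum_left)
qed

lemma root_system_nonzero: "root_system \<Phi> \<Longrightarrow> a \<in> \<Phi> \<Longrightarrow> a \<noteq> 0"
  unfolding root_system_def by auto

lemma root_system_uminus:
  assumes "root_system \<Phi>" and "a \<in> \<Phi>"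
  shows "- a \<in> \<Phi>"
proof -
  have "reflection a ` \<Phi> = \<Phi>" using assms unfolding root_system_def by blast
  then show ?thesis
    using assms reflection_self[OF root_system_nonzero[OF assms]] by (metis imageI)
qed

lemma is_base_subset_span: "is_base \<Phi> \<alpha> \<Longrightarrow> \<Phi> \<subseteq> span (range \<alpha>)"
  unfolding is_base_def by (fastforce intro: span_sum span_mul span_base)

lemma is_base_nonzero: "root_system \<Phi> \<Longrightarrow> is_base \<Phi> \<alpha> \<Longrightarrow> \<alpha> j \<noteq> 0"
  unfolding is_base_def by (auto dest: root_system_nonzero)

lemma cpair_weight_in_Ints:
  assumes "root_system \<Phi>" and "range \<alpha> \<subseteq> \<Phi>"
    and "\<forall>j. cpair lam (\<alpha> j) \<in> \<int>" and "mu \<in> weights_of \<Phi> lam"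
  shows "cpair mu (\<alpha> j) \<in> \<int>"
  using assms(4)
proof induction
  case hw
  then show ?case using assms(3) by auto
next
  case (string mu a k)
  have "\<alpha> j \<in> \<Phi>" using assms(2) by auto
  then have "cpair a (\<alpha> j) \<in> \<int>" using assms(1) string unfolding root_system_def by blast
  then show ?case using string by (simp add: cpair_diff cpair_scaleR)
qed

lemma reflection_in_weights_of:
  assumes \<Phi>: "root_system \<Phi>" and a: "a \<in> \<Phi>"
    and mu: "mu \<in> weights_of \<Phi> lam" and "cpair mu a \<in> \<int>"
  shows "reflection a mu \<in> weights_of \<Phi> lam"
proof -
  obtain k where k: "cpair mu a = of_int k" using assms(4) by (elim Ints_cases) blast
  show ?thesis
  proof (cases "k \<ge> 0")
    case True
    have "mu - of_int k *\<^sub>R a \<in> weights_of \<Phi> lam"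
      by (rule weights_of.string[OF mu a True]) (simp add: k)
    then show ?thesis by (simp add: reflection_def k)
  next
    case False
    \<comment> \<open>a negative pairing is the length of the (-a)-string through mu\<close>
    have "mu - of_int (- k) *\<^sub>R (- a) \<in> weights_of \<Phi> lam"
      by (rule weights_of.string[OF mu root_system_uminus[OF \<Phi> a]])
         (use False k in \<open>simp_all add: cpair_def\<close>)
    then show ?thesis by (simp add: reflection_def k)
  qed
qed

lemma weights_of_subset_span:
  assumes "\<Phi> \<subseteq> span B" and "lam \<in> span B"
  shows "weights_of \<Phi> lam \<subseteq> span B"
proof
  show "mu \<in> span B" if "mu \<in> weights_of \<Phi> lam" for mu
    using that by induction (use assms in \<open>auto intro: span_diff span_mul\<close>)
qed

lemma fund_weight_spec:
  fixes \<alpha> :: "'i::finite \<Rightarrow> 'a::euclidean_space"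
  assumes inj: "inj \<alpha>" and ind: "independent (range \<alpha>)" and nz: "\<And>j. \<alpha> j \<noteq> 0"
  shows "fund_weight \<alpha> i \<in> span (range \<alpha>) \<and>
       (\<forall>j. cpair (fund_weight \<alpha> i) (\<alpha> j) = (if j = i then 1 else 0))"
proof -
  let ?P = "\<lambda>v. v \<in> span (range \<alpha>) \<and> (\<forall>j. cpair v (\<alpha> j) = (if j = i then 1 else 0))"
  \<comment> \<open>the witness is the component of \<alpha>_i orthogonal to the other simple roots, rescaled\<close>
  obtain y z where y: "y \<in> span (\<alpha> ` (UNIV - {i}))"
    and z: "\<And>w. w \<in> span (\<alpha> ` (UNIV - {i})) \<Longrightarrow> orthogonal z w"
    and eq: "\<alpha> i = y + z"
    using orthogonal_subspace_decomp_exists[of "\<alpha> ` (UNIV - {i})" "\<alpha> i"] by blast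
  have "span (\<alpha> ` (UNIV - {i})) \<subseteq> span (range \<alpha>)" by (rule span_mono) auto
  then have "y \<in> span (range \<alpha>)" using y by blast
  moreover have "\<alpha> i \<in> span (range \<alpha>)" by (rule span_base) simp
  ultimately have z_span: "z \<in> span (range \<alpha>)"
    using span_diff[of "\<alpha> i" _ y] eq by simp
  have "range \<alpha> - {\<alpha> i} = \<alpha> ` (UNIV - {i})" using inj by (auto simp: inj_def)
  then have "\<alpha> i \<notin> span (\<alpha> ` (UNIV - {i}))"
    using ind unfolding dependent_def by (metis rangeI)
  then have "z \<noteq> 0" using eq y by auto
  then have zz: "z \<bullet> z > 0" by simp
  have z_other: "z \<bullet> \<alpha> j = 0" if "j \<noteq> i" for j
    using z[of "\<alpha> j"] that by (auto simp: orthogonal_def intro: span_base)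
  have z_self: "z \<bullet> \<alpha> i = z \<bullet> z"
    using eq z[OF y] by (simp add: inner_add_right orthogonal_def)
  define v where "v = ((\<alpha> i \<bullet> \<alpha> i) / (2 * (z \<bullet> z))) *\<^sub>R z"
  have Pv: "?P v"
  proof (intro conjI allI)
    show "v \<in> span (range \<alpha>)" unfolding v_def using z_span by (rule span_mul)
    show "cpair v (\<alpha> j) = (if j = i then 1 else 0)" for j
    proof (cases "j = i")
      case True
      have "v \<bullet> \<alpha> i = (\<alpha> i \<bullet> \<alpha> i) / 2" using z_self zz by (simp add: v_def)
      then show ?thesis using True nz[of i] by (simp add: cpair_def)
    qed (simp add: z_other v_def cpair_def)
  qed
  have "w = v" if "?P w" for w
  proof -
    have diff_span: "w - v \<in> span (range \<alpha>)" using that Pv by (auto intro: span_diff)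
    have diff_orth: "(w - v) \<bullet> \<alpha> j = 0" for j
    proof -
      have "cpair (w - v) (\<alpha> j) = 0" using that Pv by (simp add: cpair_diff)
      then show ?thesis using nz[of j] by (simp add: cpair_def)
    qed
    have "orthogonal (w - v) (w - v)"
      by (rule orthogonal_to_span[OF diff_span]) (auto simp: orthogonal_def diff_orth)
    then show ?thesis by (simp add: orthogonal_def)
  qed
  then have "?P (THE v. ?P v)" using Pv by (rule theI[of ?P v, rotated])
  then show ?thesis unfolding fund_weight_def .
qed

lemma
  fixes \<alpha> :: "'i::finite \<Rightarrow> 'a::euclidean_space"
  assumes "inj \<alpha>" and "independent (range \<alpha>)" and nz: "\<And>j. \<alpha> j \<noteq> 0"
  shows fund_weight_tilde_in_span: "fund_weight_tilde \<alpha> i \<in> span (range \<alpha>)"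
    and inner_fund_weight_tilde: "fund_weight_tilde \<alpha> i \<bullet> \<alpha> j = (if j = i then 1 else 0)"
proof -
  note spec = fund_weight_spec[OF assms, of i]
  show "fund_weight_tilde \<alpha> i \<in> span (range \<alpha>)"
    using spec unfolding fund_weight_tilde_def by (auto intro: span_mul)
  have "cpair (fund_weight \<alpha> i) (\<alpha> j) = (if j = i then 1 else 0)" using spec by blast
  moreover have "\<alpha> j \<bullet> \<alpha> j \<noteq> 0" "\<alpha> i \<bullet> \<alpha> i \<noteq> 0" using nz by auto
  ultimately show "fund_weight_tilde \<alpha> i \<bullet> \<alpha> j = (if j = i then 1 else 0)"
    unfolding fund_weight_tilde_def cpair_def
    by (cases "j = i") (simp_all add: field_simps inner_commute)
qed

lemma in_span_eq_0_if_orthogonal: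
  fixes \<alpha> :: "'i::finite \<Rightarrow> 'a::euclidean_space"
  assumes inj: "inj \<alpha>" and w: "w \<in> span (range \<alpha>)"
    and other: "\<And>j. j \<noteq> i \<Longrightarrow> w \<bullet> \<alpha> j = 0 \<and> t \<bullet> \<alpha> j = 0"
    and "t \<bullet> \<alpha> i = 1" and "w \<bullet> t = 0"
  shows "w = 0"
proof -
  obtain u where "w = (\<Sum>x\<in>range \<alpha>. u x *\<^sub>R x)"
    using w span_finite[of "range \<alpha>"] by auto
  then have "w = (\<Sum>j\<in>UNIV. u (\<alpha> j) *\<^sub>R \<alpha> j)"
    using sum.reindex[OF inj, of "\<lambda>x. u x *\<^sub>R x"] by simp
  then have "w \<bullet> x = (\<Sum>j\<in>UNIV. u (\<alpha> j) * (\<alpha> j \<bullet> x))" for x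
    by (simp add: inner_sum_left)
  then have "w \<bullet> x = u (\<alpha> i) * (\<alpha> i \<bullet> x) + (\<Sum>j\<in>UNIV - {i}. u (\<alpha> j) * (\<alpha> j \<bullet> x))" for x
    by (simp add: sum.remove)
  \<comment> \<open>pairing with t isolates the \<alpha>_i-coordinate of w, pairing with w then gives (w, w) = 0\<close>
  from this[of t] this[of w] show ?thesis
    using assms(4,5) other by (simp add: inner_commute)
qed

lemma in_span_eq_scaleR_fund_weight_tilde:
  fixes \<alpha> :: "'i::finite \<Rightarrow> 'a::euclidean_space"
  assumes base: "inj \<alpha>" "independent (range \<alpha>)" "\<And>j. \<alpha> j \<noteq> 0"
    and w: "w \<in> span (range \<alpha>)" and other: "\<And>j. j \<noteq> i \<Longrightarrow> w \<bullet> \<alpha> j = 0"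
  shows "w = ((w \<bullet> fund_weight_tilde \<alpha> i) / (fund_weight_tilde \<alpha> i \<bullet> fund_weight_tilde \<alpha> i))
              *\<^sub>R fund_weight_tilde \<alpha> i"
    (is "w = (?c / (?t \<bullet> ?t)) *\<^sub>R ?t")
proof -
  have t_alpha: "?t \<bullet> \<alpha> j = (if j = i then 1 else 0)" for j
    by (rule inner_fund_weight_tilde[OF base])
  have "?t \<bullet> ?t \<noteq> 0" using t_alpha[of i] by auto
  have "w - (?c / (?t \<bullet> ?t)) *\<^sub>R ?t = 0"
  proof (rule in_span_eq_0_if_orthogonal[OF base(1), of _ i ?t])
    show "w - (?c / (?t \<bullet> ?t)) *\<^sub>R ?t \<in> span (range \<alpha>)"
      using w fund_weight_tilde_in_span[OF base] by (auto intro: span_diff span_mul)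
  qed (use other t_alpha \<open>?t \<bullet> ?t \<noteq> 0\<close> in \<open>simp_all add: inner_diff_left\<close>)
  then show ?thesis by simp
qed

lemma reflection_in_face_weights:
  assumes \<Phi>: "root_system \<Phi>" and base: "is_base \<Phi> \<alpha>" and lam: "dominant_integral \<alpha> lam"
    and "j \<noteq> i" and mu: "mu \<in> face_weights \<Phi> \<alpha> lam m i"
  shows "reflection (\<alpha> j) mu \<in> face_weights \<Phi> \<alpha> lam m i"
proof -
  have basis: "inj \<alpha>" "independent (range \<alpha>)" "range \<alpha> \<subseteq> \<Phi>"
    using base unfolding is_base_def by auto
  have "\<forall>k. cpair lam (\<alpha> k) \<in> \<int>"
    using lam unfolding dominant_integral_def by (metis Ints_of_nat)
  moreover have mu_weight: "mu \<in> weights_of \<Phi> lam" using mu by (simp add: face_weights_def)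
  ultimately have "cpair mu (\<alpha> j) \<in> \<int>" by (rule cpair_weight_in_Ints[OF \<Phi> basis(3)])
  moreover have "\<alpha> j \<in> \<Phi>" using basis(3) by auto
  ultimately have "reflection (\<alpha> j) mu \<in> weights_of \<Phi> lam"
    using reflection_in_weights_of[OF \<Phi> _ mu_weight] by blast
  moreover have "\<alpha> j \<bullet> fund_weight_tilde \<alpha> i = 0"
    using inner_fund_weight_tilde[OF basis(1,2) is_base_nonzero[OF \<Phi> base]] \<open>j \<noteq> i\<close>
    by (simp add: inner_commute)
  ultimately show ?thesis
    using mu unfolding face_weights_def by (simp add: reflection_def inner_diff_left)
qed

lemma inner_sum_face_weights_fund_weight_tilde:
  "(\<Sum>(face_weights \<Phi> \<alpha> lam m i)) \<bullet> fund_weight_tilde \<alpha> i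
     = m i * real (card (face_weights \<Phi> \<alpha> lam m i))"
proof -
  have "(\<Sum>(face_weights \<Phi> \<alpha> lam m i)) \<bullet> fund_weight_tilde \<alpha> i
      = (\<Sum>mu\<in>face_weights \<Phi> \<alpha> lam m i. mu \<bullet> fund_weight_tilde \<alpha> i)"
    by (simp add: inner_sum_left)
  also have "\<dots> = (\<Sum>mu\<in>face_weights \<Phi> \<alpha> lam m i. m i)"
    by (rule sum.cong) (auto simp: face_weights_def)
  finally show ?thesis by simp
qed

theorem proposition4p9:
  fixes \<Phi> :: "'a::euclidean_space set" and \<alpha> :: "'i::finite \<Rightarrow> 'a"
    and lam :: 'a and m :: "'i \<Rightarrow> real" and i :: 'i
  assumes "root_system \<Phi>" and "irreducible_rs \<Phi>" and "is_base \<Phi> \<alpha>"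
    and "dominant_integral \<alpha> lam"
    and "lam = (\<Sum>j\<in>UNIV. m j *\<^sub>R \<alpha> j)"
  shows "(\<Sum>mu\<in>face_weights \<Phi> \<alpha> lam m i. mu) =
           (m i * real (card (face_weights \<Phi> \<alpha> lam m i))
              / (fund_weight_tilde \<alpha> i \<bullet> fund_weight_tilde \<alpha> i)) *\<^sub>R fund_weight_tilde \<alpha> i
       \<and> (\<exists>c::real. (1 / real (card (face_weights \<Phi> \<alpha> lam m i))) *\<^sub>R
                      (\<Sum>mu\<in>face_weights \<Phi> \<alpha> lam m i. mu) = c *\<^sub>R fund_weight_tilde \<alpha> i)"
proof -
  let ?P = "face_weights \<Phi> \<alpha> lam m i"
  have basis: "inj \<alpha>" "independent (range \<alpha>)" "\<And>j. \<alpha> j \<noteq> 0"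
    using assms(3) is_base_nonzero[OF assms(1,3)] unfolding is_base_def by auto
  have "?P \<subseteq> span (range \<alpha>)"
    using weights_of_subset_span[OF is_base_subset_span[OF assms(3)]] assms(4)
    unfolding face_weights_def dominant_integral_def by blast
  then have "\<Sum>?P \<in> span (range \<alpha>)" by (auto intro: span_sum)
  moreover have "\<Sum>?P \<bullet> \<alpha> j = 0" if "j \<noteq> i" for j
    using reflection_in_face_weights[OF assms(1,3,4) that]
    by (intro inner_sum_eq_0_if_reflection_invariant basis(3)) blast
  ultimately have sum_eq: "\<Sum>?P = (m i * real (card ?P)
      / (fund_weight_tilde \<alpha> i \<bullet> fund_weight_tilde \<alpha> i)) *\<^sub>R fund_weight_tilde \<alpha> i"
    using in_span_eq_scaleR_fund_weight_tilde[OF basis]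
    by (metis inner_sum_face_weights_fund_weight_tilde)
  then show ?thesis by (auto simp: sum_eq)
qed

end
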